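(* Let $\mathcal{L}$ be a Tarskian, Boolean logic, $K$ a theory, $\delta$ a choice function, $\mathcal{C}\subseteq K$ a cleaving, and $\pi:\mathbb{N}\to\mathcal{C}$ a bijection. Then the composition $\delta_\pi$, defined by $\delta_\pi(\varphi):=\delta(\varphi\lor\min_\pi(\varphi))$, is a choice function.
   Context: Logic $(\mathrm{Fm},\mathrm{Cn})$: countable $\mathrm{Fm}$; Tarskian: $\mathrm{Cn}$ monotone, extensive, idempotent; Boolean: there are $\neg,\lor$ with $\mathrm{Cn}(\{\varphi\})\cap\mathrm{Cn}(\{\neg\varphi\})=\mathrm{Cn}(\emptyset)$, $\mathrm{Cn}(\{\varphi,\neg\varphi\})=\mathrm{Fm}$, and usual $\lor$-introduction/elimination relative to $\mathrm{Cn}$; $\bot$ denotes a formula with $\mathrm{Cn}(\{\bot\})=\mathrm{Fm}$. $\varphi\equiv\psi$ iff $\mathrm{Cn}(\{\varphi\})=\mathrm{Cn}(\{\psi\})$. $\mathrm{CCT}$ = complete consistent theories; $\overline{\varphi}:=\{X\in\mathrm{CCT}\mid\varphi\notin X\}$. A choice function is $\delta:\mathrm{Fm}\to\mathcal{P}(\mathrm{CCT})$ with (CF1) $\delta(\varphi)\neq\emptyset$; (CF2) if $\varphi\notin\mathrm{Cn}(\emptyset)$ then $\delta(\varphi)\subseteq\overline{\varphi}$; (CF3) $\varphi\equiv\psi$ implies $\delta(\varphi)=\delta(\psi)$. A cleaving is an infinite set $\mathcal{C}$ of formulae with, for distinct $\varphi,\psi\in\mathcal{C}$, $\varphi\not\equiv\psi$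 and $\varphi\lor\psi\in\mathrm{Cn}(\emptyset)$. $\min_\pi(\varphi):=\pi(i)$ for the least $i\in\mathbb{N}$ with $\overline{\varphi}\cap\overline{\pi(i)}\neq\emptyset$, and $\min_\pi(\varphi):=\bot$ if no such $i$ exists. *)

theory Defs
  imports Main "HOL-Library.Countable"
begin

text \<open>A logic (Fm, Cn): formulae are the elements of a countable type 'f,
  Cn :: 'f set \<Rightarrow> 'f set is the consequence operator.\<close>

definition tarskian :: "('f set \<Rightarrow> 'f set) \<Rightarrow> bool" where
  "tarskian Cn \<longleftrightarrow>
     (\<forall>A B. A \<subseteq> B \<longrightarrow> Cn A \<subseteq> Cn B) \<and>
     (\<forall>A. A \<subseteq> Cn A) \<and>
     (\<forall>A. Cn (Cn A) = Cn A)"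

definition boolean :: "('f set \<Rightarrow> 'f set) \<Rightarrow> ('f \<Rightarrow> 'f) \<Rightarrow> ('f \<Rightarrow> 'f \<Rightarrow> 'f) \<Rightarrow> bool" where
  "boolean Cn neg vee \<longleftrightarrow>
     (\<forall>\<phi>. Cn {\<phi>} \<inter> Cn {neg \<phi>} = Cn {}) \<and>
     (\<forall>\<phi>. Cn {\<phi>, neg \<phi>} = UNIV) \<and>
     (\<forall>\<phi> \<psi>. vee \<phi> \<psi> \<in> Cn {\<phi>} \<and> vee \<phi> \<psi> \<in> Cn {\<psi>}) \<and>
     (\<forall>\<Gamma> \<phi> \<psi> \<chi>. \<chi> \<in> Cn (insert \<phi> \<Gamma>) \<longrightarrow> \<chi> \<in> Cn (insert \<psi> \<Gamma>)
          \<longrightarrow> \<chi> \<in> Cn (insert (vee \<phi> \<psi>) \<Gamma>))"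

definition is_theory :: "('f set \<Rightarrow> 'f set) \<Rightarrow> 'f set \<Rightarrow> bool" where
  "is_theory Cn K \<longleftrightarrow> Cn K = K"

definition equiv_fm :: "('f set \<Rightarrow> 'f set) \<Rightarrow> 'f \<Rightarrow> 'f \<Rightarrow> bool" where
  "equiv_fm Cn \<phi> \<psi> \<longleftrightarrow> Cn {\<phi>} = Cn {\<psi>}"

definition CCT :: "('f set \<Rightarrow> 'f set) \<Rightarrow> ('f \<Rightarrow> 'f) \<Rightarrow> 'f set set" where
  "CCT Cn neg = {X. Cn X = X \<and> X \<noteq> UNIV \<and> (\<forall>\<phi>. \<phi> \<in> X \<or> neg \<phi> \<in> X)}"

definition co :: "('f set \<Rightarrow> 'f set) \<Rightarrow> ('f \<Rightarrow> 'f) \<Rightarrow> 'f \<Rightarrow> 'f set set" where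
  "co Cn neg \<phi> = {X \<in> CCT Cn neg. \<phi> \<notin> X}"

definition choice_function :: "('f set \<Rightarrow> 'f set) \<Rightarrow> ('f \<Rightarrow> 'f) \<Rightarrow> ('f \<Rightarrow> 'f set set) \<Rightarrow> bool" where
  "choice_function Cn neg \<delta> \<longleftrightarrow>
     (\<forall>\<phi>. \<delta> \<phi> \<subseteq> CCT Cn neg) \<and>
     (\<forall>\<phi>. \<delta> \<phi> \<noteq> {}) \<and>
     (\<forall>\<phi>. \<phi> \<notin> Cn {} \<longrightarrow> \<delta> \<phi> \<subseteq> co Cn neg \<phi>) \<and>
     (\<forall>\<phi> \<psi>. equiv_fm Cn \<phi> \<psi> \<longrightarrow> \<delta> \<phi> = \<delta> \<psi>)"

definition cleaving :: "('f set \<Rightarrow> 'f set) \<Rightarrow> ('f \<Rightarrow> 'f \<Rightarrow> 'f) \<Rightarrow> 'f set \<Rightarrow> bool" where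
  "cleaving Cn vee C \<longleftrightarrow> infinite C \<and>
     (\<forall>\<phi>\<in>C. \<forall>\<psi>\<in>C. \<phi> \<noteq> \<psi> \<longrightarrow> \<not> equiv_fm Cn \<phi> \<psi> \<and> vee \<phi> \<psi> \<in> Cn {})"

definition min_pi :: "('f set \<Rightarrow> 'f set) \<Rightarrow> ('f \<Rightarrow> 'f) \<Rightarrow> 'f \<Rightarrow> (nat \<Rightarrow> 'f) \<Rightarrow> 'f \<Rightarrow> 'f" where
  "min_pi Cn neg falsum \<pi> \<phi> =
     (if \<exists>i. co Cn neg \<phi> \<inter> co Cn neg (\<pi> i) \<noteq> {}
      then \<pi> (LEAST i. co Cn neg \<phi> \<inter> co Cn neg (\<pi> i) \<noteq> {})
      else falsum)"

definition comp_choice :: "('f set \<Rightarrow> 'f set) \<Rightarrow> ('f \<Rightarrow> 'f) \<Rightarrow> ('f \<Rightarrow> 'f \<Rightarrow> 'f) \<Rightarrow> 'f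
    \<Rightarrow> ('f \<Rightarrow> 'f set set) \<Rightarrow> (nat \<Rightarrow> 'f) \<Rightarrow> 'f \<Rightarrow> 'f set set" where
  "comp_choice Cn neg vee falsum \<delta> \<pi> \<phi> = \<delta> (vee \<phi> (min_pi Cn neg falsum \<pi> \<phi>))"

end

theory Submission
  imports Defs
begin

text \<open>A disjunction \<open>\<phi> \<or> \<psi>\<close> fails in a complete consistent theory \<open>X\<close> as soon as both
  disjuncts fail in \<open>X\<close>, since \<open>X\<close> then contains \<open>\<not>\<phi>\<close> and \<open>\<not>\<psi>\<close> and \<open>\<or>\<close>-elimination makes
  \<open>X \<union> {\<phi> \<or> \<psi>}\<close> inconsistent. Hence \<open>\<phi> \<or> min\<^sub>\<pi>(\<phi>)\<close> is no tautology when \<open>\<phi>\<close> is not: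
  \<open>min\<^sub>\<pi>(\<phi>)\<close> is chosen so that some complete consistent theory omits both \<open>\<phi>\<close> and it, and
  if there is none, \<open>\<phi> \<or> \<bottom>\<close> is equivalent to \<open>\<phi>\<close>. Each such theory omitting \<open>\<phi> \<or> min\<^sub>\<pi>(\<phi>)\<close>
  omits \<open>\<phi>\<close>, which gives (CF2); (CF3) holds because \<open>min\<^sub>\<pi>(\<phi>)\<close> depends only on the set of
  theories omitting \<open>\<phi>\<close>, and \<open>\<or>\<close> respects equivalence.\<close>

lemma tarskian_Cn_mono: "tarskian Cn \<Longrightarrow> A \<subseteq> B \<Longrightarrow> Cn A \<subseteq> Cn B"
  unfolding tarskian_def by blast

lemma tarskian_in_Cn_singleton: "tarskian Cn \<Longrightarrow> \<phi> \<in> Cn {\<phi>}"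
  unfolding tarskian_def by blast

lemma tarskian_Cn_singleton_subset:
  assumes "tarskian Cn" "\<phi> \<in> Cn A"
  shows "Cn {\<phi>} \<subseteq> Cn A"
proof -
  have "Cn {\<phi>} \<subseteq> Cn (Cn A)" using assms by (simp add: tarskian_Cn_mono)
  then show ?thesis using assms(1) unfolding tarskian_def by metis
qed

lemma theory_closed_under_consequence:
  assumes "tarskian Cn" "Cn X = X" "\<phi> \<in> X" "\<psi> \<in> Cn {\<phi>}"
  shows "\<psi> \<in> X"
  using tarskian_Cn_singleton_subset[of Cn \<phi> X] assms by auto

lemma boolean_vee_intro1: "boolean Cn neg vee \<Longrightarrow> vee \<phi> \<psi> \<in> Cn {\<phi>}"
  and boolean_vee_intro2: "boolean Cn neg vee \<Longrightarrow> vee \<phi> \<psi> \<in> Cn {\<psi>}"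
  unfolding boolean_def by blast+

lemma boolean_explosion: "boolean Cn neg vee \<Longrightarrow> Cn {\<phi>, neg \<phi>} = UNIV"
  unfolding boolean_def by blast

lemma boolean_vee_elim:
  "boolean Cn neg vee \<Longrightarrow> \<chi> \<in> Cn {\<phi>} \<Longrightarrow> \<chi> \<in> Cn {\<psi>} \<Longrightarrow> \<chi> \<in> Cn {vee \<phi> \<psi>}"
  unfolding boolean_def by blast

lemma equiv_fm_vee_left:
  assumes T: "tarskian Cn" and B: "boolean Cn neg vee" and e: "equiv_fm Cn \<phi> \<psi>"
  shows "equiv_fm Cn (vee \<phi> \<chi>) (vee \<psi> \<chi>)"
proof -
  have "vee \<psi> \<chi> \<in> Cn {vee \<phi> \<chi>}" and "vee \<phi> \<chi> \<in> Cn {vee \<psi> \<chi>}"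
    using boolean_vee_intro1[OF B] boolean_vee_intro2[OF B] e
    by (auto simp: equiv_fm_def intro!: boolean_vee_elim[OF B])
  then show ?thesis
    unfolding equiv_fm_def by (blast dest: tarskian_Cn_singleton_subset[OF T])
qed

lemma co_vee_subset:
  assumes T: "tarskian Cn" and B: "boolean Cn neg vee"
  shows "co Cn neg (vee \<phi> \<psi>) \<subseteq> co Cn neg \<phi>"
  using theory_closed_under_consequence[OF T _ _ boolean_vee_intro1[OF B]]
  by (fastforce simp: co_def CCT_def)

lemma co_equiv_fm:
  assumes T: "tarskian Cn" and e: "equiv_fm Cn \<phi> \<psi>"
  shows "co Cn neg \<phi> = co Cn neg \<psi>"
proof -
  have "\<phi> \<in> Cn {\<psi>}" "\<psi> \<in> Cn {\<phi>}"
    using e tarskian_in_Cn_singleton[OF T] by (auto simp: equiv_fm_def)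
  then have "\<phi> \<in> X \<longleftrightarrow> \<psi> \<in> X" if "Cn X = X" for X
    using theory_closed_under_consequence[OF T that] by blast
  then show ?thesis by (auto simp: co_def CCT_def)
qed

lemma min_pi_equiv_fm:
  "tarskian Cn \<Longrightarrow> equiv_fm Cn \<phi> \<psi> \<Longrightarrow> min_pi Cn neg falsum \<pi> \<phi> = min_pi Cn neg falsum \<pi> \<psi>"
  by (simp add: min_pi_def co_equiv_fm)

lemma vee_not_tautology_if_omitted:
  assumes T: "tarskian Cn" and B: "boolean Cn neg vee" and X: "X \<in> CCT Cn neg"
    and "\<phi> \<notin> X" "\<psi> \<notin> X"
  shows "vee \<phi> \<psi> \<notin> Cn {}"
proof
  assume taut: "vee \<phi> \<psi> \<in> Cn {}"
  have closed: "Cn X = X" and consistent: "X \<noteq> UNIV" and "neg \<phi> \<in> X" "neg \<psi> \<in> X"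
    using X \<open>\<phi> \<notin> X\<close> \<open>\<psi> \<notin> X\<close> by (auto simp: CCT_def)
  then have "Cn (insert \<phi> X) = UNIV" "Cn (insert \<psi> X) = UNIV"
    using tarskian_Cn_mono[OF T, of "{\<phi>, neg \<phi>}" "insert \<phi> X"]
      tarskian_Cn_mono[OF T, of "{\<psi>, neg \<psi>}" "insert \<psi> X"] boolean_explosion[OF B]
    by auto
  then have "Cn (insert (vee \<phi> \<psi>) X) = UNIV"
    using B unfolding boolean_def by blast
  moreover have "vee \<phi> \<psi> \<in> X"
    using taut tarskian_Cn_mono[OF T, of "{}" X] closed by blast
  ultimately show False
    using closed consistent by (simp add: insert_absorb)
qed

lemma vee_min_pi_not_tautology:
  assumes T: "tarskian Cn" and B: "boolean Cn neg vee" and F: "Cn {falsum} = UNIV"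
    and "\<phi> \<notin> Cn {}"
  shows "vee \<phi> (min_pi Cn neg falsum \<pi> \<phi>) \<notin> Cn {}"
proof (cases "\<exists>i. co Cn neg \<phi> \<inter> co Cn neg (\<pi> i) \<noteq> {}")
  case True
  let ?i = "LEAST i. co Cn neg \<phi> \<inter> co Cn neg (\<pi> i) \<noteq> {}"
  have "co Cn neg \<phi> \<inter> co Cn neg (\<pi> ?i) \<noteq> {}" using True by (rule LeastI_ex)
  then obtain X where "X \<in> CCT Cn neg" "\<phi> \<notin> X" "\<pi> ?i \<notin> X" by (auto simp: co_def)
  then show ?thesis
    using True vee_not_tautology_if_omitted[OF T B] by (simp add: min_pi_def)
next
  case False
  have "\<phi> \<in> Cn {vee \<phi> falsum}"
    using boolean_vee_elim[OF B tarskian_in_Cn_singleton[OF T]] F by blast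
  then show ?thesis
    using False \<open>\<phi> \<notin> Cn {}\<close> tarskian_Cn_singleton_subset[OF T, of "vee \<phi> falsum" "{}"]
    by (auto simp: min_pi_def)
qed

theorem mainTheorem7:
  fixes Cn :: "'f::countable set \<Rightarrow> 'f set"
    and neg :: "'f \<Rightarrow> 'f" and vee :: "'f \<Rightarrow> 'f \<Rightarrow> 'f" and falsum :: 'f
    and K C :: "'f set" and \<delta> :: "'f \<Rightarrow> 'f set set" and \<pi> :: "nat \<Rightarrow> 'f"
  assumes "tarskian Cn"
    and "boolean Cn neg vee"
    and "Cn {falsum} = UNIV"
    and "is_theory Cn K"
    and "choice_function Cn neg \<delta>"
    and "cleaving Cn vee C"
    and "C \<subseteq> K"
    and "bij_betw \<pi> UNIV C"
  shows "choice_function Cn neg (comp_choice Cn neg vee falsum \<delta> \<pi>)"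
proof -
  note T = assms(1) and B = assms(2) and \<delta> = assms(5)
  let ?m = "min_pi Cn neg falsum \<pi>"
  have CF2: "\<delta> (vee \<phi> (?m \<phi>)) \<subseteq> co Cn neg \<phi>" if "\<phi> \<notin> Cn {}" for \<phi>
    using \<delta> vee_min_pi_not_tautology[OF T B assms(3) that] co_vee_subset[OF T B]
    unfolding choice_function_def by blast
  have CF3: "\<delta> (vee \<phi> (?m \<phi>)) = \<delta> (vee \<psi> (?m \<psi>))" if "equiv_fm Cn \<phi> \<psi>" for \<phi> \<psi>
    using \<delta> min_pi_equiv_fm[OF T that] equiv_fm_vee_left[OF T B that]
    unfolding choice_function_def by metis
  show ?thesis
    using \<delta> CF2 CF3 unfolding choice_function_def comp_choice_def by blast
qed

end
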